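(* Let $a,b,c\in\mathbb{C}$ with $a\neq0$, $\Re(b)>0$, $\Re(b+a+c)>0$, $\Re(b+a-c)>0$, $\Re(b-a+c)>0$, $\Re(b-a-c)>0$, and $\frac{a+c}{b},\frac{a-c}{b}\notin\{\pm1,\pm3,\pm5,\dots\}$. Fix a square root $\sqrt{a^2-c^2}$, put $\mu=\frac{\sqrt{a^2-c^2}}{2b}$, $\tau_1=\frac12-\frac{a+c}{2b}$, $\tau_2=\frac12-\frac{a-c}{2b}$, $\tau_3=\frac12+\frac{a+c}{2b}$, $\tau_4=\frac12+\frac{a-c}{2b}$, and $Q=(b-a-c)(b+a+c)(b-a+c)(b+a-c)$. Assume $\frac12\pm\mu\notin\mathbb{Z}_0^-$ and $1+\tau_j\notin\mathbb{Z}_0^-$ ($j=1,\dots,4$). Then $$ {}_7F_6\!\left(\begin{matrix}1,\ \frac32-\mu,\ \frac32+\mu,\ \tau_1,\ \tau_2,\ \tau_3,\ \tau_4\\ \frac12-\mu,\ \frac12+\mu,\ 1+\tau_1,\ 1+\tau_2,\ 1+\tau_3,\ 1+\tau_4\end{matrix};\,-1\right) =\frac{\pi Q}{2\,(ab^3-a^3b+abc^2)}\cdot\frac{\cos\!\big(\frac{a\pi}{2b}\big)\cos\!\big(\frac{c\pi}{2b}\big)}{\cos\!\big(\frac{c\pi}{b}\big)+\cos\!\big(\frac{a\pi}{b}\big)} -\frac{Q}{4\,(ab^3-a^3b+abc^2)}\left[\beta\!\left(\frac{a+b+c}{2b}\right)+\beta\!\left(\frac{a+b-c}{2b}\right)\right].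 $$
   Context: $\mathbb{Z}_0^-=\{0,-1,-2,\dots\}$. The Pochhammer symbol is $(\lambda)_0=1$, $(\lambda)_n=\lambda(\lambda+1)\cdots(\lambda+n-1)$ for $n\ge1$. The generalized hypergeometric series is ${}_pF_q\!\left(\begin{matrix}\alpha_1,\dots,\alpha_p\\ \beta_1,\dots,\beta_q\end{matrix};z\right)=\sum_{n=0}^\infty\frac{(\alpha_1)_n\cdots(\alpha_p)_n}{(\beta_1)_n\cdots(\beta_q)_n}\frac{z^n}{n!}$ (with no $\beta_j\in\mathbb{Z}_0^-$). The (lower case) beta function of one variable is $\beta(x)=\sum_{k=0}^\infty\frac{(-1)^k}{k+x}$ for $x\in\mathbb{C}\setminus\mathbb{Z}_0^-$. *)

theory Defs
  imports "HOL-Analysis.Analysis"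
begin

definition nonpos_int_set :: "complex set" where
  "nonpos_int_set = {z. \<exists>n::nat. z = - of_nat n}"

definition hyp_term :: "complex list \<Rightarrow> complex list \<Rightarrow> complex \<Rightarrow> nat \<Rightarrow> complex" where
  "hyp_term as bs z n =
     (\<Prod>a\<leftarrow>as. pochhammer a n) / (\<Prod>b\<leftarrow>bs. pochhammer b n) * z ^ n / of_nat (fact n)"

definition hypgeom :: "complex list \<Rightarrow> complex list \<Rightarrow> complex \<Rightarrow> complex" where
  "hypgeom as bs z = (\<Sum>n. hyp_term as bs z n)"

definition beta_fun :: "complex \<Rightarrow> complex" where
  "beta_fun x = (\<Sum>k. (-1) ^ k / (of_nat k + x))"

end

theory Submission
  imports Defs
begin

(*
  With p = (a + c)/(2b), q = (a - c)/(2b) and \<mu>^2 = pq, the n-th term of the very-well-poised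
  7F6 series is a rational function of n whose numerator (n + 1/2)^2 - \<mu>^2 cancels against
  the quadratic denominator, leaving four simple poles at n = -\<tau>_j.  Partial fractions turn
  the series into K (\<beta>(\<tau>1) - \<beta>(\<tau>3) + \<beta>(\<tau>2) - \<beta>(\<tau>4)).  Since \<tau>3 = 1 - \<tau>1 and \<tau>4 = 1 - \<tau>2,
  the reflection formula \<beta>(x) + \<beta>(1 - x) = \<pi> / sin (\<pi> x), obtained from the Digamma
  representation \<beta>(x) = (\<psi>((x + 1)/2) - \<psi>(x/2))/2 and the reflection formula for \<psi>,
  eliminates \<tau>1 and \<tau>2; the two secants combine into the cosine quotient.
*)

lemma sums_if_paired_sums:
  fixes f :: "nat \<Rightarrow> 'a::real_normed_vector"
  assumes f0: "f \<longlonglongrightarrow> 0" and pairs: "(\<lambda>j. f (2*j) + f (2*j+1)) sums s"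
  shows "f sums s"
proof -
  have "(\<Sum>k<2*m. f k) = (\<Sum>j<m. f (2*j) + f (2*j+1))" for m
    by (induction m) (simp_all add: algebra_simps)
  with pairs have even: "(\<lambda>m. \<Sum>k<2*m. f k) \<longlonglongrightarrow> s"
    by (simp add: sums_def)
  have "(\<lambda>n. \<Sum>k<2*(n div 2). f k) \<longlonglongrightarrow> s"
    using filterlim_compose[OF even filterlim_at_top_div_const_nat[of 2]] by simp
  moreover have "(\<lambda>n. if even n then 0 else f (n - 1)) \<longlonglongrightarrow> 0"
  proof (rule Lim_null_comparison)
    show "\<forall>\<^sub>F n in sequentially. norm (if even n then 0 else f (n - 1)) \<le> norm (f (n - 1))"
      by simp
    show "(\<lambda>n. norm (f (n - 1))) \<longlonglongrightarrow> 0"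
      using tendsto_norm_zero[OF filterlim_compose[OF f0 filterlim_minus_const_nat_at_top]] .
  qed
  ultimately have lim: "(\<lambda>n. (\<Sum>k<2*(n div 2). f k) + (if even n then 0 else f (n - 1))) \<longlonglongrightarrow> s"
    using tendsto_add by fastforce
  have "(\<lambda>n. \<Sum>k<n. f k) = (\<lambda>n. (\<Sum>k<2*(n div 2). f k) + (if even n then 0 else f (n - 1)))"
  proof (intro ext)
    fix n :: nat
    show "(\<Sum>k<n. f k) = (\<Sum>k<2*(n div 2). f k) + (if even n then 0 else f (n - 1))"
    proof (cases "even n")
      case False
      then obtain m where "n = 2*m + 1" by (rule oddE)
      then show ?thesis by simp
    qed simp
  qed
  with lim show ?thesis
    by (simp add: sums_def)
qed

lemma sin_pi_times_nonzero:
  fixes z :: complex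
  assumes "z \<notin> \<int>"
  shows "sin (of_real pi * z) \<noteq> 0"
proof
  assume "sin (of_real pi * z) = 0"
  then obtain n :: int where "of_real pi * z = of_real (of_int n * pi)"
    by (auto simp: sin_eq_0)
  then have "z = of_int n" by (simp add: mult.commute)
  with assms show False by auto
qed

text \<open>Differentiate the reflection formula \<open>\<Gamma>(z) \<Gamma>(1 - z) = \<pi> / sin (\<pi> z)\<close>.\<close>

lemma Digamma_reflection_complex:
  fixes z :: complex
  assumes z: "z \<notin> \<int>"
  shows "Digamma (1 - z) - Digamma z = of_real pi * cot (of_real pi * z)"
proof -
  have "1 - z \<notin> \<int>" using z Ints_diff[of 1 "1 - z"] by auto
  with z have poles: "z \<notin> \<int>\<^sub>\<le>\<^sub>0" "1 - z \<notin> \<int>\<^sub>\<le>\<^sub>0"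
    using nonpos_Ints_subset_Ints by blast+
  have sin_nz: "sin (of_real pi * z) \<noteq> 0"
    using sin_pi_times_nonzero[OF z] .
  have "((\<lambda>w. Gamma w * Gamma (1 - w)) has_field_derivative
      Gamma z * Gamma (1 - z) * (Digamma z - Digamma (1 - z))) (at z)"
    using poles by (auto intro!: derivative_eq_intros simp: algebra_simps)
  moreover have "(\<lambda>w::complex. Gamma w * Gamma (1 - w)) = (\<lambda>w. of_real pi / sin (of_real pi * w))"
    by (intro ext Gamma_reflection_complex)
  moreover have "((\<lambda>w. of_real pi / sin (of_real pi * w)) has_field_derivative
      - (of_real pi * (cos (of_real pi * z) * of_real pi)) / (sin (of_real pi * z))\<^sup>2) (at z)"
    using sin_nz by (auto intro!: derivative_eq_intros simp: power2_eq_square)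
  ultimately have "of_real pi / sin (of_real pi * z) * (Digamma z - Digamma (1 - z))
      = - (of_real pi * (cos (of_real pi * z) * of_real pi)) / (sin (of_real pi * z))\<^sup>2"
    using DERIV_unique Gamma_reflection_complex by metis
  then have "Digamma z - Digamma (1 - z)
      = - (of_real pi * (cos (of_real pi * z) * of_real pi)) / (sin (of_real pi * z))\<^sup>2
        / (of_real pi / sin (of_real pi * z))"
    using sin_nz by (subst eq_divide_eq) (auto simp: mult.commute)
  also have "\<dots> = - (of_real pi * cot (of_real pi * z))"
    using sin_nz by (simp add: cot_def field_simps power2_eq_square)
  finally show ?thesis by (simp add: algebra_simps)
qed

lemma beta_fun_sums_Digamma:
  fixes x :: complex
  assumes x: "x \<notin> \<int>\<^sub>\<le>\<^sub>0"
  shows "(\<lambda>k. (-1) ^ k / (of_nat k + x)) sums ((Digamma ((x + 1) / 2) - Digamma (x / 2)) / 2)"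
proof (rule sums_if_paired_sums)
  \<comment> \<open>Two consecutive terms combine into the difference of the Digamma series at (x + 1)/2 and x/2.\<close>
  have nz: "of_nat k + x \<noteq> 0" for k
    using x plus_of_nat_eq_0_imp[of x k] by (auto simp: add.commute)
  have inverse_lim: "(\<lambda>k. inverse (of_nat k + x)) \<longlonglongrightarrow> 0"
    by (intro filterlim_compose[OF tendsto_inverse_0]
        tendsto_add_filterlim_at_infinity'[OF _ tendsto_const] tendsto_of_nat)
  show "(\<lambda>k. (-1) ^ k / (of_nat k + x)) \<longlonglongrightarrow> 0"
    by (intro Lim_null_comparison[OF _ tendsto_norm_zero[OF inverse_lim]])
       (simp add: divide_inverse norm_mult norm_power norm_inverse)
  have Digamma_sums: "(\<lambda>k. inverse (of_nat (Suc k)) - inverse (z + of_nat k)) sums (Digamma z + euler_mascheroni)"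
    if "z \<noteq> 0" for z :: complex
    using summable_sums[OF summable_Digamma[OF that]] by (simp add: Digamma_def)
  have pair_eq: "(-1) ^ (2 * j) / (of_nat (2 * j) + x) + (-1) ^ (2 * j + 1) / (of_nat (2 * j + 1) + x)
      = ((inverse (of_nat (Suc j)) - inverse ((x + 1) / 2 + of_nat j))
         - (inverse (of_nat (Suc j)) - inverse (x / 2 + of_nat j))) / 2" for j
  proof -
    have inverses: "inverse ((x + 1) / 2 + of_nat j) = 2 / (of_nat (2 * j + 1) + x)"
      "inverse (x / 2 + of_nat j) = 2 / (of_nat (2 * j) + x)"
      by (simp_all add: field_simps)
    have "((A - 2 / v) - (A - 2 / u)) / 2 = 1 / u - 1 / v" for A u v :: complex
      by (simp add: field_simps)
    then show ?thesis
      unfolding inverses by simp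
  qed
  have "x \<noteq> 0" "x + 1 \<noteq> 0" using x by (auto simp: add_eq_0_iff2)
  then have "(\<lambda>j. ((inverse (of_nat (Suc j)) - inverse ((x + 1) / 2 + of_nat j))
                  - (inverse (of_nat (Suc j)) - inverse (x / 2 + of_nat j))) / 2)
      sums (((Digamma ((x + 1) / 2) + euler_mascheroni) - (Digamma (x / 2) + euler_mascheroni)) / 2)"
    by (intro sums_divide sums_diff Digamma_sums) simp_all
  then show "(\<lambda>j. (-1) ^ (2 * j) / (of_nat (2 * j) + x) + (-1) ^ (2 * j + 1) / (of_nat (2 * j + 1) + x))
      sums ((Digamma ((x + 1) / 2) - Digamma (x / 2)) / 2)"
    unfolding pair_eq by simp
qed

lemma beta_fun_eq_Digamma:
  fixes x :: complex
  assumes "x \<notin> \<int>\<^sub>\<le>\<^sub>0"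
  shows "beta_fun x = (Digamma ((x + 1) / 2) - Digamma (x / 2)) / 2"
  unfolding beta_fun_def using sums_unique[OF beta_fun_sums_Digamma[OF assms]] by simp

lemma beta_fun_sums:
  fixes x :: complex
  assumes "x \<notin> \<int>\<^sub>\<le>\<^sub>0"
  shows "(\<lambda>k. (-1) ^ k / (of_nat k + x)) sums beta_fun x"
  unfolding beta_fun_def using sums_summable[OF beta_fun_sums_Digamma[OF assms]] by (rule summable_sums)

lemma beta_fun_reflection:
  fixes x :: complex
  assumes x: "x \<notin> \<int>"
  shows "beta_fun x + beta_fun (1 - x) = of_real pi / sin (of_real pi * x)"
proof -
  have x': "1 - x \<notin> \<int>" using x Ints_diff[of 1 "1 - x"] by auto
  have half_not_Int: "y / 2 \<notin> \<int>" if "y \<notin> \<int>" for y :: complex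
    using that Ints_mult[of 2 "y / 2"] by auto
  define t where "t = of_real pi * (x / 2)"
  have px: "of_real pi * x = 2 * t"
    by (simp add: t_def)
  have sin_nz: "sin t \<noteq> 0" and cos_nz: "cos t \<noteq> 0"
    using sin_pi_times_nonzero[OF x] unfolding px sin_double by auto
  have "x \<notin> \<int>\<^sub>\<le>\<^sub>0" "1 - x \<notin> \<int>\<^sub>\<le>\<^sub>0"
    using x x' nonpos_Ints_subset_Ints by blast+
  then have "beta_fun x + beta_fun (1 - x)
      = ((Digamma ((1 - x + 1) / 2) - Digamma (x / 2)) + (Digamma ((x + 1) / 2) - Digamma ((1 - x) / 2))) / 2"
    by (simp add: beta_fun_eq_Digamma diff_divide_distrib add_divide_distrib)
  also have "\<dots> = (of_real pi * cot t + of_real pi * cot (of_real pi / 2 - t)) / 2"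
  proof -
    have args: "(1 - x + 1) / 2 = 1 - x / 2" "(x + 1) / 2 = 1 - (1 - x) / 2"
      "of_real pi / 2 - t = of_real pi * ((1 - x) / 2)"
      by (simp_all add: t_def field_simps)
    have "Digamma ((1 - x + 1) / 2) - Digamma (x / 2) = of_real pi * cot t"
      unfolding args t_def by (rule Digamma_reflection_complex[OF half_not_Int[OF x]])
    moreover have "Digamma ((x + 1) / 2) - Digamma ((1 - x) / 2) = of_real pi * cot (of_real pi / 2 - t)"
      unfolding args by (rule Digamma_reflection_complex[OF half_not_Int[OF x']])
    ultimately show ?thesis by (simp only:)
  qed
  also have "\<dots> = of_real pi / (2 * sin t * cos t)"
  proof -
    have cot_shift: "cot (of_real pi / 2 - t) = sin t / cos t"
      unfolding cot_def using sin_cos_eq[of t] cos_sin_eq[of t] by simp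
    have "of_real pi * (cos t * cos t) + of_real pi * (sin t * sin t) = (of_real pi :: complex)"
      using sin_cos_squared_add[of t] by (simp add: power2_eq_square flip: distrib_left)
    then show ?thesis
      unfolding cot_shift unfolding cot_def using sin_nz cos_nz by (simp add: field_simps)
  qed
  also have "\<dots> = of_real pi / sin (of_real pi * x)"
    unfolding px sin_double by (simp add: mult.assoc)
  finally show ?thesis .
qed

lemma cos_pi_times_nonzero:
  fixes z :: complex
  assumes "1/2 - z \<notin> \<int>"
  shows "cos (of_real pi * z) \<noteq> 0"
  using sin_pi_times_nonzero[OF assms] by (simp add: right_diff_distrib sin_cos_eq)

lemma sec_add_sec_diff:
  fixes x y :: "'a::{real_normed_field,banach}"
  assumes "cos (x + y) \<noteq> 0" "cos (x - y) \<noteq> 0"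
  shows "1 / cos (x + y) + 1 / cos (x - y) = 4 * (cos x * cos y) / (cos (2 * y) + cos (2 * x))"
proof -
  have "cos (2 * y) = cos ((x + y) - (x - y))" "cos (2 * x) = cos ((x + y) + (x - y))"
    by (rule arg_cong[where f = cos], simp add: algebra_simps)+
  then have denominator: "cos (2 * y) + cos (2 * x) = 2 * cos (x + y) * cos (x - y)"
    by (simp only: cos_add cos_diff) simp
  have "1 / cos (x + y) + 1 / cos (x - y) = (cos (x + y) + cos (x - y)) / (cos (x + y) * cos (x - y))"
    using assms by (simp add: field_simps)
  also have "cos (x + y) + cos (x - y) = 2 * cos x * cos y"
    by (simp add: cos_add cos_diff)
  finally show ?thesis
    unfolding denominator by (simp add: field_simps)
qed

lemma nonpos_int_set_eq_nonpos_Ints: "nonpos_int_set = \<int>\<^sub>\<le>\<^sub>0"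
  unfolding nonpos_int_set_def by (auto elim!: nonpos_Ints_cases')

lemma odd_integer_free_imp_half_diff_not_Ints:
  fixes y :: complex
  assumes odd: "\<forall>k::nat. y \<noteq> of_nat (2*k+1) \<and> y \<noteq> - of_nat (2*k+1)"
  shows "1/2 - y/2 \<notin> \<int>"
proof
  assume "1/2 - y/2 \<in> \<int>"
  then obtain n :: int where "1/2 - y/2 = of_int n" by (auto elim: Ints_cases)
  then have y: "y = of_int (1 - 2 * n)" by (simp add: field_simps)
  show False
  proof (cases "n \<le> 0")
    case True
    then show False using odd[rule_format, of "nat (- n)"] y by (simp add: of_nat_nat)
  next
    case False
    then show False using odd[rule_format, of "nat (n - 1)"] y by (simp add: of_nat_nat)
  qed
qed

lemma pochhammer_plus_one_divide:
  fixes z :: "'a::field_char_0"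
  assumes "z \<notin> \<int>\<^sub>\<le>\<^sub>0"
  shows "pochhammer (z + 1) n / pochhammer z n = (z + of_nat n) / z"
proof -
  have "z * pochhammer (z + 1) n = (z + of_nat n) * pochhammer z n"
    using pochhammer_rec[of z n] pochhammer_rec'[of z n] by simp
  moreover have "z \<noteq> 0" "pochhammer z n \<noteq> 0"
    using assms by (auto simp: pochhammer_eq_0_iff)
  ultimately show ?thesis by (simp add: field_simps)
qed

lemma hyp_term_Cons_one:
  "hyp_term (1 # as) bs z n = (\<Prod>a\<leftarrow>as. pochhammer a n) / (\<Prod>b\<leftarrow>bs. pochhammer b n) * z ^ n"
  by (simp add: hyp_term_def flip: pochhammer_fact)

lemma well_poised_partial_fractions:
  fixes m p q y :: "'a::field_char_0"
  assumes m: "m^2 = p*q" "1/2 - m \<noteq> 0" "1/2 + m \<noteq> 0" and pq: "p + q \<noteq> 0"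
    and u: "y + (1/2 - p) \<noteq> 0" "y + (1/2 + p) \<noteq> 0" "y + (1/2 - q) \<noteq> 0" "y + (1/2 + q) \<noteq> 0"
  shows "(1/2 - m + y) / (1/2 - m) * ((1/2 + m + y) / (1/2 + m))
      * ((1/2 - p) / (y + (1/2 - p))) * ((1/2 - q) / (y + (1/2 - q)))
      * ((1/2 + p) / (y + (1/2 + p))) * ((1/2 + q) / (y + (1/2 + q)))
    = (1/4 - p^2) * (1/4 - q^2) / (2 * (p + q) * (1/4 - p*q))
      * (1 / (y + (1/2 - p)) - 1 / (y + (1/2 + p)) + 1 / (y + (1/2 - q)) - 1 / (y + (1/2 + q)))"
    (is "?lhs = ?C / (2 * (p + q) * ?e) * ?fractions")
proof -
  define u1 u2 u3 u4 where "u1 = y + (1/2 - p)" "u2 = y + (1/2 + p)" "u3 = y + (1/2 - q)" "u4 = y + (1/2 + q)"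
  define N where "N = (1/2 + y)^2 - p*q"
  define S where "S = u2*u3*u4 - u1*u3*u4 + u1*u2*u4 - u1*u2*u3"
  have e: "?e = (1/2 - m) * (1/2 + m)" and N: "N = (1/2 - m + y) * (1/2 + m + y)"
    using m(1) by (simp_all add: N_def algebra_simps power2_eq_square)
  have C: "?C = (1/2 - p) * (1/2 + p) * ((1/2 - q) * (1/2 + q))"
    by (simp add: algebra_simps power2_eq_square)
  have key: "N * (2 * (p + q)) = S"
    unfolding N_def S_def u1_u2_u3_u4_def by algebra
  have "?lhs = N / ?e * (?C / (u1 * u2 * u3 * u4))"
    unfolding N e C u1_u2_u3_u4_def by (simp add: ac_simps)
  also have "\<dots> = ?C / (2 * (p + q) * ?e) * (S / (u1 * u2 * u3 * u4))"
    using pq by (simp add: add_eq_0_iff2 flip: key)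
  also have "S / (u1 * u2 * u3 * u4) = 1 / u1 - 1 / u2 + 1 / u3 - 1 / u4"
    using u[folded u1_u2_u3_u4_def] by (simp add: S_def field_simps)
  also have "\<dots> = ?fractions"
    by (simp add: u1_u2_u3_u4_def)
  finally show ?thesis .
qed

lemma well_poised_7F6_term:
  fixes m p q z :: complex
  assumes m: "m^2 = p*q" "1/2 - m \<notin> \<int>\<^sub>\<le>\<^sub>0" "1/2 + m \<notin> \<int>\<^sub>\<le>\<^sub>0" and pq: "p + q \<noteq> 0"
    and t: "1/2 - p \<notin> \<int>\<^sub>\<le>\<^sub>0" "1/2 + p \<notin> \<int>\<^sub>\<le>\<^sub>0" "1/2 - q \<notin> \<int>\<^sub>\<le>\<^sub>0" "1/2 + q \<notin> \<int>\<^sub>\<le>\<^sub>0"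
  shows "hyp_term [1, 3/2 - m, 3/2 + m, 1/2 - p, 1/2 - q, 1/2 + p, 1/2 + q]
            [1/2 - m, 1/2 + m, 1 + (1/2 - p), 1 + (1/2 - q), 1 + (1/2 + p), 1 + (1/2 + q)] z n
    = (1/4 - p^2) * (1/4 - q^2) / (2 * (p + q) * (1/4 - p*q))
      * (z ^ n / (of_nat n + (1/2 - p)) - z ^ n / (of_nat n + (1/2 + p))
         + z ^ n / (of_nat n + (1/2 - q)) - z ^ n / (of_nat n + (1/2 + q)))"
proof -
  have up: "pochhammer (w + 1) n / pochhammer w n = (w + of_nat n) / w" if "w \<notin> \<int>\<^sub>\<le>\<^sub>0" for w :: complex
    using pochhammer_plus_one_divide[OF that] .
  have down: "pochhammer w n / pochhammer (1 + w) n = w / (of_nat n + w)" if "w \<notin> \<int>\<^sub>\<le>\<^sub>0" for w :: complex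
    using arg_cong[OF up[OF that], of inverse] by (simp add: add.commute)
  have nz: "of_nat n + w \<noteq> 0" if "w \<notin> \<int>\<^sub>\<le>\<^sub>0" for w :: complex
    using that plus_of_nat_eq_0_imp[of w n] by (auto simp: add.commute)
  have m_nz: "1/2 - m \<noteq> 0" "1/2 + m \<noteq> 0"
    using m(2,3) by (metis zero_in_nonpos_Ints)+
  have "3/2 - m = (1/2 - m) + 1" "3/2 + m = (1/2 + m) + 1"
    by simp_all
  then have "hyp_term [1, 3/2 - m, 3/2 + m, 1/2 - p, 1/2 - q, 1/2 + p, 1/2 + q]
            [1/2 - m, 1/2 + m, 1 + (1/2 - p), 1 + (1/2 - q), 1 + (1/2 + p), 1 + (1/2 + q)] z n
    = (1/2 - m + of_nat n) / (1/2 - m) * ((1/2 + m + of_nat n) / (1/2 + m))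
      * ((1/2 - p) / (of_nat n + (1/2 - p))) * ((1/2 - q) / (of_nat n + (1/2 - q)))
      * ((1/2 + p) / (of_nat n + (1/2 + p))) * ((1/2 + q) / (of_nat n + (1/2 + q))) * z ^ n"
    unfolding hyp_term_Cons_one
    by (simp only: up[OF m(2), symmetric] up[OF m(3), symmetric] down[OF t(1), symmetric]
        down[OF t(2), symmetric] down[OF t(3), symmetric] down[OF t(4), symmetric])
       (simp add: times_divide_times_eq ac_simps)
  also have "\<dots> = (1/4 - p^2) * (1/4 - q^2) / (2 * (p + q) * (1/4 - p*q))
      * (1 / (of_nat n + (1/2 - p)) - 1 / (of_nat n + (1/2 + p))
         + 1 / (of_nat n + (1/2 - q)) - 1 / (of_nat n + (1/2 + q))) * z ^ n"
    unfolding well_poised_partial_fractions[OF m(1) m_nz pq nz[OF t(1)] nz[OF t(2)] nz[OF t(3)] nz[OF t(4)]]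
    by (rule refl)
  also have "K * (1 / u1 - 1 / u2 + 1 / u3 - 1 / u4) * w = K * (w / u1 - w / u2 + w / u3 - w / u4)"
    for K u1 u2 u3 u4 w :: complex
    by (simp add: divide_inverse algebra_simps)
  finally show ?thesis .
qed

lemma well_poised_7F6_sums:
  fixes m p q :: complex
  assumes m: "m^2 = p*q" "1/2 - m \<notin> \<int>\<^sub>\<le>\<^sub>0" "1/2 + m \<notin> \<int>\<^sub>\<le>\<^sub>0" and pq: "p + q \<noteq> 0"
    and p: "1/2 - p \<notin> \<int>" and q: "1/2 - q \<notin> \<int>"
  shows "hyp_term [1, 3/2 - m, 3/2 + m, 1/2 - p, 1/2 - q, 1/2 + p, 1/2 + q]
            [1/2 - m, 1/2 + m, 1 + (1/2 - p), 1 + (1/2 - q), 1 + (1/2 + p), 1 + (1/2 + q)] (-1)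
    sums ((1/4 - p^2) * (1/4 - q^2) / (2 * (p + q) * (1/4 - p*q))
      * (of_real pi / cos (of_real pi * p) + of_real pi / cos (of_real pi * q)
         - 2 * (beta_fun (1/2 + p) + beta_fun (1/2 + q))))"
proof -
  have complement: "1 - (1/2 - w) = 1/2 + w" for w :: complex
    by simp
  have "1/2 + w \<notin> \<int>" if "1/2 - w \<notin> \<int>" for w :: complex
    using that Ints_diff[OF Ints_1, of "1/2 + w"] by (auto simp: diff_diff_eq2)
  with p q have p': "1/2 + p \<notin> \<int>" and q': "1/2 + q \<notin> \<int>"
    by blast+
  have reflection: "beta_fun (1/2 - w) = of_real pi / cos (of_real pi * w) - beta_fun (1/2 + w)"
    if "1/2 - w \<notin> \<int>" for w :: complex
    using beta_fun_reflection[OF that]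
    by (simp add: complement right_diff_distrib sin_cos_eq eq_diff_eq)
  have beta_sums: "(\<lambda>n. (-1) ^ n / (of_nat n + w)) sums beta_fun w" if "w \<notin> \<int>" for w :: complex
    using that nonpos_Ints_subset_Ints by (intro beta_fun_sums) blast
  have t: "1/2 - p \<notin> \<int>\<^sub>\<le>\<^sub>0" "1/2 + p \<notin> \<int>\<^sub>\<le>\<^sub>0" "1/2 - q \<notin> \<int>\<^sub>\<le>\<^sub>0" "1/2 + q \<notin> \<int>\<^sub>\<le>\<^sub>0"
    using p p' q q' nonpos_Ints_subset_Ints by blast+
  have "beta_fun (1/2 - p) - beta_fun (1/2 + p) + beta_fun (1/2 - q) - beta_fun (1/2 + q)
      = of_real pi / cos (of_real pi * p) + of_real pi / cos (of_real pi * q)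
        - 2 * (beta_fun (1/2 + p) + beta_fun (1/2 + q))"
    by (simp add: reflection[OF p] reflection[OF q])
  moreover have "(\<lambda>n. (1/4 - p^2) * (1/4 - q^2) / (2 * (p + q) * (1/4 - p*q))
      * ((-1) ^ n / (of_nat n + (1/2 - p)) - (-1) ^ n / (of_nat n + (1/2 + p))
         + (-1) ^ n / (of_nat n + (1/2 - q)) - (-1) ^ n / (of_nat n + (1/2 + q))))
    sums ((1/4 - p^2) * (1/4 - q^2) / (2 * (p + q) * (1/4 - p*q))
      * (beta_fun (1/2 - p) - beta_fun (1/2 + p) + beta_fun (1/2 - q) - beta_fun (1/2 + q)))"
    by (intro sums_mult sums_add sums_diff beta_sums p p' q q')
  ultimately show ?thesis
    unfolding well_poised_7F6_term[OF m pq t] by (simp only:)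
qed

lemma well_poised_coefficient:
  fixes a b c :: "'a::field_char_0"
  assumes "b \<noteq> 0"
  defines "p \<equiv> (a + c) / (2 * b)" and "q \<equiv> (a - c) / (2 * b)"
  shows "(1/4 - p^2) * (1/4 - q^2) / (2 * (p + q) * (1/4 - p*q))
    = (b - a - c) * (b + a + c) * (b - a + c) * (b + a - c) / (8 * (a * b^3 - a^3 * b + a * b * c^2))"
proof -
  have "(1/4 - p^2) * (1/4 - q^2) = (b - a - c) * (b + a + c) * (b - a + c) * (b + a - c) / (16 * b^4)"
    and "2 * (p + q) * (1/4 - p*q) = (a * b^3 - a^3 * b + a * b * c^2) / (2 * b^4)"
    using assms by (simp_all add: field_simps power2_eq_square power3_eq_cube power4_eq_xxxx)
  moreover have "N / (16 * b^4) / (D / (2 * b^4)) = N / (8 * D)" for N D :: 'a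
    using assms by (cases "D = 0") (simp_all add: field_simps)
  ultimately show ?thesis
    by (simp only:)
qed

lemma well_poised_7F6_value:
  fixes a b c B :: complex
  defines "p \<equiv> (a + c) / (2 * b)" and "q \<equiv> (a - c) / (2 * b)"
  assumes b: "b \<noteq> 0" and p: "1/2 - p \<notin> \<int>" and q: "1/2 - q \<notin> \<int>"
  shows "(1/4 - p^2) * (1/4 - q^2) / (2 * (p + q) * (1/4 - p*q))
      * (of_real pi / cos (of_real pi * p) + of_real pi / cos (of_real pi * q) - 2 * B)
    = of_real pi * ((b - a - c) * (b + a + c) * (b - a + c) * (b + a - c))
        / (2 * (a * b^3 - a^3 * b + a * b * c^2))
        * (cos (a * of_real pi / (2*b)) * cos (c * of_real pi / (2*b))
           / (cos (c * of_real pi / b) + cos (a * of_real pi / b)))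
      - (b - a - c) * (b + a + c) * (b - a + c) * (b + a - c)
        / (4 * (a * b^3 - a^3 * b + a * b * c^2)) * B"
proof -
  define x y where "x = a * of_real pi / (2*b)" and "y = c * of_real pi / (2*b)"
  define Q D where "Q = (b - a - c) * (b + a + c) * (b - a + c) * (b + a - c)"
    and "D = a * b^3 - a^3 * b + a * b * c^2"
  have angles: "of_real pi * p = x + y" "of_real pi * q = x - y"
    "c * of_real pi / b = 2 * y" "a * of_real pi / b = 2 * x"
    using b by (simp_all add: p_def q_def x_def y_def field_simps)
  have "(1/4 - p^2) * (1/4 - q^2) / (2 * (p + q) * (1/4 - p*q)) = Q / (8 * D)"
    unfolding p_def q_def Q_def D_def by (rule well_poised_coefficient[OF b])
  moreover have "of_real pi / cos (x + y) + of_real pi / cos (x - y)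
      = of_real pi * (4 * (cos x * cos y / (cos (2 * y) + cos (2 * x))))"
    using cos_pi_times_nonzero[OF p] cos_pi_times_nonzero[OF q]
    by (simp add: angles distrib_left flip: sec_add_sec_diff)
  moreover have "Q / (8 * D) * (of_real pi * (4 * W) - 2 * B) = of_real pi * Q / (2 * D) * W - Q / (4 * D) * B"
    for W :: complex
    by (cases "D = 0") (simp_all add: field_simps)
  ultimately show ?thesis
    unfolding angles x_def[symmetric] y_def[symmetric] Q_def[symmetric] D_def[symmetric]
    by (simp only:)
qed

theorem mainTheorem6:
  fixes a b c s :: complex
  assumes ha: "a \<noteq> 0"
    and hb: "Re b > 0"
    and h1: "Re (b + a + c) > 0" and h2: "Re (b + a - c) > 0"
    and h3: "Re (b - a + c) > 0" and h4: "Re (b - a - c) > 0"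
    and hodd1: "\<forall>k::nat. (a + c) / b \<noteq> of_nat (2*k+1) \<and> (a + c) / b \<noteq> - of_nat (2*k+1)"
    and hodd2: "\<forall>k::nat. (a - c) / b \<noteq> of_nat (2*k+1) \<and> (a - c) / b \<noteq> - of_nat (2*k+1)"
    and hs: "s ^ 2 = a ^ 2 - c ^ 2"
    and hmu1: "1/2 + s / (2*b) \<notin> nonpos_int_set"
    and hmu2: "1/2 - s / (2*b) \<notin> nonpos_int_set"
    and ht1: "1 + (1/2 - (a + c) / (2*b)) \<notin> nonpos_int_set"
    and ht2: "1 + (1/2 - (a - c) / (2*b)) \<notin> nonpos_int_set"
    and ht3: "1 + (1/2 + (a + c) / (2*b)) \<notin> nonpos_int_set"
    and ht4: "1 + (1/2 + (a - c) / (2*b)) \<notin> nonpos_int_set"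
  shows
    "let \<mu> = s / (2*b);
         \<tau>1 = 1/2 - (a + c) / (2*b);
         \<tau>2 = 1/2 - (a - c) / (2*b);
         \<tau>3 = 1/2 + (a + c) / (2*b);
         \<tau>4 = 1/2 + (a - c) / (2*b);
         Q = (b - a - c) * (b + a + c) * (b - a + c) * (b + a - c);
         D = a * b ^ 3 - a ^ 3 * b + a * b * c ^ 2
     in (hyp_term [1, 3/2 - \<mu>, 3/2 + \<mu>, \<tau>1, \<tau>2, \<tau>3, \<tau>4]
                  [1/2 - \<mu>, 1/2 + \<mu>, 1 + \<tau>1, 1 + \<tau>2, 1 + \<tau>3, 1 + \<tau>4] (-1)) sums
        (of_real pi * Q / (2 * D) *
           (cos (a * of_real pi / (2*b)) * cos (c * of_real pi / (2*b))
             / (cos (c * of_real pi / b) + cos (a * of_real pi / b)))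
         - Q / (4 * D) * (beta_fun ((a + b + c) / (2*b)) + beta_fun ((a + b - c) / (2*b))))"
proof -
  have b: "b \<noteq> 0" using hb by auto
  define p q m where "p = (a + c) / (2*b)" and "q = (a - c) / (2*b)" and "m = s / (2*b)"
  have m2: "m^2 = p*q"
    using hs b by (simp add: p_def q_def m_def power_divide field_simps power2_eq_square)
  have m: "1/2 - m \<notin> \<int>\<^sub>\<le>\<^sub>0" "1/2 + m \<notin> \<int>\<^sub>\<le>\<^sub>0"
    using hmu1 hmu2 by (simp_all add: m_def nonpos_int_set_eq_nonpos_Ints)
  have pq: "p + q \<noteq> 0"
    using ha b by (simp add: p_def q_def field_simps)
  have p: "1/2 - p \<notin> \<int>" and q: "1/2 - q \<notin> \<int>"
    using odd_integer_free_imp_half_diff_not_Ints[OF hodd1] odd_integer_free_imp_half_diff_not_Ints[OF hodd2]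
    by (simp_all add: p_def q_def mult.commute)
  have arguments: "(a + b + c) / (2*b) = 1/2 + p" "(a + b - c) / (2*b) = 1/2 + q"
    using b by (simp_all add: p_def q_def field_simps)
  show ?thesis
    using well_poised_7F6_sums[OF m2 m pq p q]
    unfolding Let_def m_def[symmetric] p_def[symmetric] q_def[symmetric] arguments
      well_poised_7F6_value[OF b p[unfolded p_def] q[unfolded q_def], folded p_def q_def] .
qed

end
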